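(* Let $A$ be a non-reduced Abelian group. Then $\mathrm{End}\,A$ is centrally essential if and only if $\mathrm{End}\,A$ is commutative.
   Context: All rings are associative with non-zero identity. A ring $R$ is centrally essential if for every non-zero $a\in R$ there exist non-zero elements $x,y$ of the center of $R$ with $ax=y$. An Abelian group is non-reduced if it contains a non-zero divisible subgroup. *)

theory Defs
  imports Main
begin

text \<open>The Abelian group A is the whole carrier of a type of class ab_group_add.\<close>

definition nsmul :: "nat \<Rightarrow> 'a::ab_group_add \<Rightarrow> 'a" where
  "nsmul n x = (\<Sum>_<n. x)"

definition is_subgroup :: "'a::ab_group_add set \<Rightarrow> bool" where
  "is_subgroup D \<longleftrightarrow> 0 \<in> D \<and> (\<forall>x\<in>D. \<forall>y\<in>D. x + y \<in> D) \<and> (\<forall>x\<in>D. - x \<in> D)"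

definition divisible_subgroup :: "'a::ab_group_add set \<Rightarrow> bool" where
  "divisible_subgroup D \<longleftrightarrow> is_subgroup D \<and>
     (\<forall>d\<in>D. \<forall>n::nat. n > 0 \<longrightarrow> (\<exists>e\<in>D. nsmul n e = d))"

definition non_reduced :: "'a::ab_group_add itself \<Rightarrow> bool" where
  "non_reduced _ \<longleftrightarrow> (\<exists>D::'a set. divisible_subgroup D \<and> D \<noteq> {0})"

text \<open>The endomorphism ring End A: additive maps, with pointwise addition,
  zero map as zero and composition as multiplication.\<close>

definition End :: "('a::ab_group_add \<Rightarrow> 'a) set" where
  "End = {f. \<forall>x y. f (x + y) = f x + f y}"

definition End_center :: "('a::ab_group_add \<Rightarrow> 'a) set" where
  "End_center = {z \<in> End. \<forall>f\<in>End. z \<circ> f = f \<circ> z}"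

definition End_centrally_essential :: "'a::ab_group_add itself \<Rightarrow> bool" where
  "End_centrally_essential _ \<longleftrightarrow>
     (\<forall>a\<in>(End :: ('a \<Rightarrow> 'a) set). a \<noteq> (\<lambda>_. 0) \<longrightarrow>
        (\<exists>x\<in>End_center. \<exists>y\<in>End_center. x \<noteq> (\<lambda>_. 0) \<and> y \<noteq> (\<lambda>_. 0) \<and> a \<circ> x = y))"

definition End_commutative :: "'a::ab_group_add itself \<Rightarrow> bool" where
  "End_commutative _ \<longleftrightarrow> (\<forall>f\<in>(End :: ('a \<Rightarrow> 'a) set). \<forall>g\<in>End. f \<circ> g = g \<circ> f)"

end

(*
  If End A is commutative, the identity is a non-zero central element witnessing central
  essentiality (A is non-zero, being non-reduced).

  Conversely, central essentiality makes every idempotent endomorphism central. Divisible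
  subgroups are direct summands, so every endomorphism maps each divisible subgroup into
  itself, and if e projects onto a non-zero divisible summand D then ker e is torsion: an
  element of infinite order in ker e could be sent to a non-zero element of D by an
  endomorphism vanishing on D, which would not commute with e. It therefore suffices to see
  that all endomorphisms commute at elements of D of infinite order and at torsion elements.
  An element d of infinite order in D lies in the invariant torsion-free divisible subgroup
  generated by d/1!, d/2!, ..., on which endomorphisms act by rationals. A torsion element is
  a sum of primary ones. If some element of order p has finite p-height h, say p^h y, then
  the cyclic group generated by y is a pure bounded subgroup, hence a direct summand, and the
  centrality of its projection forces the whole p-primary part into it. Otherwise every
  p-primary element lies in an invariant Pruefer subgroup. In both cases endomorphisms act
  on p-primary elements by integers.
*)

theory Submission
  imports Defs "HOL-Computational_Algebra.Primes"
begin

section \<open>Integer multiples\<close>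

lemma nsmul_0 [simp]: "nsmul 0 x = 0"
  by (simp add: nsmul_def)

lemma nsmul_Suc: "nsmul (Suc n) x = x + nsmul n x"
  by (simp add: nsmul_def add.commute)

lemma nsmul_0_right [simp]: "nsmul n 0 = 0"
  by (simp add: nsmul_def)

lemma nsmul_add_left: "nsmul (m + n) x = nsmul m x + nsmul n x"
  by (induction m) (simp_all add: nsmul_Suc add.assoc)

lemma nsmul_add_right: "nsmul n (x + y) = nsmul n x + nsmul n y"
  by (induction n) (simp_all add: nsmul_Suc algebra_simps)

lemma nsmul_minus_right: "nsmul n (- x) = - nsmul n x"
  by (induction n) (simp_all add: nsmul_Suc algebra_simps)

lemma nsmul_diff_right: "nsmul n (x - y) = nsmul n x - nsmul n y"
  using nsmul_add_right[of n x "- y"] by (simp add: nsmul_minus_right)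

lemma nsmul_mult: "nsmul (m * n) x = nsmul m (nsmul n x)"
  by (induction m) (simp_all add: nsmul_Suc nsmul_add_left)

definition zmul :: "int \<Rightarrow> 'a::ab_group_add \<Rightarrow> 'a" where
  "zmul j x = nsmul (nat j) x - nsmul (nat (- j)) x"

lemma zmul_of_nat: "zmul (int n) x = nsmul n x"
  by (simp add: zmul_def)

lemma zmul_diff_of_nat: "zmul (int n - int m) x = nsmul n x - nsmul m x"
proof -
  have "nat (int n - int m) + m = nat (- (int n - int m)) + n"
    by linarith
  then have "nsmul (nat (int n - int m)) x + nsmul m x = nsmul (nat (- (int n - int m))) x + nsmul n x"
    by (metis nsmul_add_left)
  then show ?thesis
    unfolding zmul_def by (simp add: algebra_simps)
qed

lemma zmul_0_left [simp]: "zmul 0 x = 0"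
  by (simp add: zmul_def)

lemma zmul_1 [simp]: "zmul 1 x = x"
  by (simp add: zmul_def nsmul_def)

lemma zmul_0_right [simp]: "zmul j 0 = 0"
  by (simp add: zmul_def)

lemma zmul_add_left: "zmul (a + b) x = zmul a x + zmul b x"
proof -
  have "a + b = int (nat a + nat b) - int (nat (- a) + nat (- b))"
    by linarith
  then have "zmul (a + b) x = nsmul (nat a + nat b) x - nsmul (nat (- a) + nat (- b)) x"
    by (metis zmul_diff_of_nat)
  then show ?thesis
    by (simp add: zmul_def nsmul_add_left algebra_simps)
qed

lemma zmul_minus_left: "zmul (- a) x = - zmul a x"
  by (simp add: zmul_def)

lemma zmul_diff_left: "zmul (a - b) x = zmul a x - zmul b x"
  using zmul_add_left[of a "- b" x] by (simp add: zmul_minus_left)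

lemma zmul_add_right: "zmul j (x + y) = zmul j x + zmul j y"
  by (simp add: zmul_def nsmul_add_right algebra_simps)

lemma zmul_minus_right: "zmul j (- x) = - zmul j x"
  by (simp add: zmul_def nsmul_minus_right algebra_simps)

lemma zmul_diff_right: "zmul j (x - y) = zmul j x - zmul j y"
  using zmul_add_right[of j x "- y"] by (simp add: zmul_minus_right)

lemma zmul_mult: "zmul (a * b) x = zmul a (zmul b x)"
proof -
  have "a * b = int (nat a * nat b + nat (- a) * nat (- b)) - int (nat a * nat (- b) + nat (- a) * nat b)"
    by (cases "a \<ge> 0"; cases "b \<ge> 0") (simp_all add: algebra_simps)
  then have "zmul (a * b) x =
      nsmul (nat a * nat b + nat (- a) * nat (- b)) x - nsmul (nat a * nat (- b) + nat (- a) * nat b) x"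
    by (metis zmul_diff_of_nat)
  moreover have "nsmul (nat b) (nsmul (nat (- a)) x) = nsmul (nat (- a)) (nsmul (nat b) x)"
    by (metis nsmul_mult mult.commute)
  ultimately show ?thesis
    by (simp add: zmul_def nsmul_add_left nsmul_mult nsmul_diff_right algebra_simps)
qed

lemma zmul_commute: "zmul a (zmul b x) = zmul b (zmul a x)"
  by (metis zmul_mult mult.commute)

lemma zmul_eq_0_imp_eq_0_if_no_torsion:
  assumes "\<forall>n>0. zmul (int n) x \<noteq> 0" and "zmul j x = 0"
  shows "j = 0"
proof (rule ccontr)
  assume "j \<noteq> 0"
  then have "nat \<bar>j\<bar> > 0"
    by simp
  moreover have "zmul (int (nat \<bar>j\<bar>)) x = 0"
    using assms(2) by (cases "j \<ge> 0") (simp_all add: zmul_minus_left)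
  ultimately show False
    using assms(1) by blast
qed

section \<open>Endomorphisms, subgroups and cyclic subgroups\<close>

lemma End_add: "f \<in> End \<Longrightarrow> f (x + y) = f x + f y"
  by (simp add: End_def)

lemma End_0: "f \<in> End \<Longrightarrow> f 0 = 0"
  using End_add[of f 0 0] by simp

lemma End_minus: "f \<in> End \<Longrightarrow> f (- x) = - f x"
  using End_add[of f x "- x"] End_0[of f] by (simp add: eq_neg_iff_add_eq_0 add.commute)

lemma End_diff: "f \<in> End \<Longrightarrow> f (x - y) = f x - f y"
  using End_add[of f x "- y"] End_minus[of f y] by simp

lemma End_nsmul: "f \<in> End \<Longrightarrow> f (nsmul n x) = nsmul n (f x)"
  by (induction n) (simp_all add: nsmul_Suc End_add End_0)

lemma End_zmul: "f \<in> End \<Longrightarrow> f (zmul j x) = zmul j (f x)"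
  by (simp add: zmul_def End_diff End_nsmul)

lemma subgroup_0: "is_subgroup H \<Longrightarrow> 0 \<in> H"
  by (simp add: is_subgroup_def)

lemma subgroup_add: "is_subgroup H \<Longrightarrow> x \<in> H \<Longrightarrow> y \<in> H \<Longrightarrow> x + y \<in> H"
  by (simp add: is_subgroup_def)

lemma subgroup_minus: "is_subgroup H \<Longrightarrow> x \<in> H \<Longrightarrow> - x \<in> H"
  by (simp add: is_subgroup_def)

lemma subgroup_diff: "is_subgroup H \<Longrightarrow> x \<in> H \<Longrightarrow> y \<in> H \<Longrightarrow> x - y \<in> H"
  using subgroup_add[of H x "- y"] subgroup_minus[of H y] by simp

lemma subgroup_nsmul: "is_subgroup H \<Longrightarrow> x \<in> H \<Longrightarrow> nsmul n x \<in> H"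
  by (induction n) (simp_all add: nsmul_Suc subgroup_0 subgroup_add)

lemma subgroup_zmul: "is_subgroup H \<Longrightarrow> x \<in> H \<Longrightarrow> zmul j x \<in> H"
  unfolding zmul_def by (simp add: subgroup_diff subgroup_nsmul)

definition multiples :: "'a::ab_group_add \<Rightarrow> 'a set" where
  "multiples x = range (\<lambda>j. zmul j x)"

lemma zmul_in_multiples [simp]: "zmul j x \<in> multiples x"
  by (simp add: multiples_def)

lemma in_multiples_iff: "y \<in> multiples x \<longleftrightarrow> (\<exists>j. y = zmul j x)"
  by (auto simp: multiples_def)

lemma self_in_multiples: "x \<in> multiples x"
  using zmul_in_multiples[of 1 x] by simp

lemma is_subgroup_multiples: "is_subgroup (multiples x)"
  unfolding is_subgroup_def multiples_def
  by (auto simp: image_iff zmul_add_left[symmetric] zmul_minus_left[symmetric] intro: exI[of _ 0])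

definition additive_on :: "'a::ab_group_add set \<Rightarrow> ('a \<Rightarrow> 'b::ab_group_add) \<Rightarrow> bool" where
  "additive_on H \<phi> \<longleftrightarrow> (\<forall>u\<in>H. \<forall>v\<in>H. \<phi> (u + v) = \<phi> u + \<phi> v)"

lemma additive_on_0:
  assumes "is_subgroup H" "additive_on H \<phi>"
  shows "\<phi> 0 = 0"
  using assms subgroup_0[of H] unfolding additive_on_def by (metis add_cancel_right_right add_0)

lemma additive_on_diff:
  assumes H: "is_subgroup H" and \<phi>: "additive_on H \<phi>" and "x \<in> H" "y \<in> H"
  shows "\<phi> (x - y) = \<phi> x - \<phi> y"
proof -
  have "\<phi> (x - y) + \<phi> y = \<phi> x"
    using assms subgroup_diff[OF H] unfolding additive_on_def by (metis diff_add_cancel)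
  then show ?thesis
    by (simp add: eq_diff_eq)
qed

lemma additive_on_zmul:
  assumes H: "is_subgroup H" and \<phi>: "additive_on H \<phi>" and x: "x \<in> H"
  shows "\<phi> (zmul j x) = zmul j (\<phi> x)"
proof -
  have "\<phi> (nsmul n x) = nsmul n (\<phi> x)" for n
    by (induction n) (use assms in \<open>simp_all add: nsmul_Suc additive_on_0 subgroup_nsmul additive_on_def\<close>)
  then show ?thesis
    unfolding zmul_def by (simp add: additive_on_diff[OF H \<phi>] subgroup_nsmul[OF H x])
qed

section \<open>Extension of homomorphisms\<close>

lemma int_ideal_principal:
  fixes I :: "int set"
  assumes "0 \<in> I" and diff: "\<And>a b. a \<in> I \<Longrightarrow> b \<in> I \<Longrightarrow> a - b \<in> I"
    and mult: "\<And>a t. a \<in> I \<Longrightarrow> t * a \<in> I"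
  shows "\<exists>m\<ge>0. \<forall>j. j \<in> I \<longleftrightarrow> m dvd j"
proof (cases "I \<subseteq> {0}")
  case True
  then show ?thesis
    using assms(1) by (intro exI[of _ 0]) auto
next
  case False
  then obtain j where "j \<in> I" "j \<noteq> 0"
    by blast
  moreover have "\<bar>j\<bar> = sgn j * j"
    by (simp add: abs_sgn mult.commute)
  ultimately have "\<bar>j\<bar> \<in> I"
    using mult[of j "sgn j"] by metis
  then have "int (nat \<bar>j\<bar>) \<in> I" "nat \<bar>j\<bar> > 0"
    using \<open>j \<noteq> 0\<close> by simp_all
  then have ex: "\<exists>n. n > 0 \<and> int n \<in> I"
    by blast
  define n0 where "n0 = (LEAST n. n > 0 \<and> int n \<in> I)"
  have n0: "n0 > 0" "int n0 \<in> I"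
    using LeastI_ex[OF ex] unfolding n0_def by auto
  have "j \<in> I \<longleftrightarrow> int n0 dvd j" for j
  proof
    assume "j \<in> I"
    then have "j mod int n0 \<in> I"
      using diff mult n0(2) minus_div_mult_eq_mod[of j "int n0"] by metis
    moreover have "0 \<le> j mod int n0" "j mod int n0 < int n0"
      using n0(1) by simp_all
    ultimately have "j mod int n0 = 0"
      using Least_le[of "\<lambda>n. n > 0 \<and> int n \<in> I" "nat (j mod int n0)"] unfolding n0_def by fastforce
    then show "int n0 dvd j"
      by presburger
  next
    assume "int n0 dvd j"
    then show "j \<in> I"
      using mult n0(2) by (metis dvd_def mult.commute)
  qed
  then show ?thesis
    by (intro exI[of _ "int n0"]) simp
qed

lemma subgroup_multiples_dvd:
  assumes H: "is_subgroup H"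
  shows "\<exists>m\<ge>0. \<forall>j. zmul j x \<in> H \<longleftrightarrow> m dvd j"
proof -
  have "\<exists>m\<ge>0. \<forall>j. j \<in> {j. zmul j x \<in> H} \<longleftrightarrow> m dvd j"
    by (rule int_ideal_principal)
      (use H in \<open>simp_all add: subgroup_0 subgroup_diff subgroup_zmul zmul_diff_left zmul_mult\<close>)
  then show ?thesis
    by simp
qed

lemma exists_compatible_value:
  assumes H: "is_subgroup H" "additive_on H \<phi>" and C: "is_subgroup C"
    and divisible: "\<And>m. m > 0 \<Longrightarrow> zmul m x \<in> H \<Longrightarrow> \<exists>c\<in>C. zmul m c = \<phi> (zmul m x)"
  shows "\<exists>c\<in>C. \<forall>j. zmul j x \<in> H \<longrightarrow> zmul j c = \<phi> (zmul j x)"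
proof -
  obtain m where m: "m \<ge> 0" "\<And>j. zmul j x \<in> H \<longleftrightarrow> m dvd j"
    using subgroup_multiples_dvd[OF H(1), of x] by blast
  show ?thesis
  proof (cases "m = 0")
    case True
    with m(2) have j0: "j = 0" if "zmul j x \<in> H" for j
      using that by simp
    have "zmul j 0 = \<phi> (zmul j x)" if "zmul j x \<in> H" for j
      using j0[OF that] additive_on_0[OF H] by simp
    then show ?thesis
      using subgroup_0[OF C] by blast
  next
    case False
    moreover have "zmul m x \<in> H"
      using m(2) by simp
    ultimately obtain c where c: "c \<in> C" "zmul m c = \<phi> (zmul m x)"
      using divisible m(1) by force
    have "zmul j c = \<phi> (zmul j x)" if "zmul j x \<in> H" for j
    proof -
      from that m(2) have "m dvd j"
        by blast
      then obtain t where "j = t * m"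
        by (metis dvd_def mult.commute)
      then show ?thesis
        using c(2) additive_on_zmul[OF H \<open>zmul m x \<in> H\<close>, of t] by (simp add: zmul_mult)
    qed
    with c(1) show ?thesis
      by blast
  qed
qed

lemma is_subgroup_plus_multiples:
  assumes H: "is_subgroup H"
  shows "is_subgroup {a + zmul j x | a j. a \<in> H}"
  unfolding is_subgroup_def
proof (intro conjI ballI)
  have "0 = 0 + zmul 0 x"
    by simp
  then show "0 \<in> {a + zmul j x | a j. a \<in> H}"
    using subgroup_0[OF H] by blast
  show "p + q \<in> {a + zmul j x | a j. a \<in> H}"
    if pq: "p \<in> {a + zmul j x | a j. a \<in> H}" "q \<in> {a + zmul j x | a j. a \<in> H}" for p q
  proof -
    obtain a j a' j' where "a \<in> H" "a' \<in> H" "p = a + zmul j x" "q = a' + zmul j' x"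
      using pq by blast
    then have "a + a' \<in> H" "p + q = (a + a') + zmul (j + j') x"
      using subgroup_add[OF H] by (simp_all add: zmul_add_left algebra_simps)
    then show ?thesis
      by blast
  qed
  show "- p \<in> {a + zmul j x | a j. a \<in> H}" if p: "p \<in> {a + zmul j x | a j. a \<in> H}" for p
  proof -
    obtain a j where "a \<in> H" "p = a + zmul j x"
      using p by blast
    then have "- a \<in> H" "- p = - a + zmul (- j) x"
      using subgroup_minus[OF H] by (simp_all add: zmul_minus_left)
    then show ?thesis
      by blast
  qed
qed

lemma exists_fun_on_plus_multiples:
  assumes "\<And>a a' j j'. a \<in> H \<Longrightarrow> a' \<in> H \<Longrightarrow> a + zmul j x = a' + zmul j' x \<Longrightarrow> g a j = g a' j'"
  shows "\<exists>\<psi>. \<forall>a\<in>H. \<forall>j. \<psi> (a + zmul j x) = g a j"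
proof -
  define \<psi> where "\<psi> z = (let (a, j) = SOME (a, j). a \<in> H \<and> z = a + zmul j x in g a j)" for z
  have "\<psi> (a + zmul j x) = g a j" if "a \<in> H" for a j
  proof -
    obtain a' j' where rep: "(SOME (a', j'). a' \<in> H \<and> a + zmul j x = a' + zmul j' x) = (a', j')"
      by fastforce
    have "\<exists>p. case p of (a', j') \<Rightarrow> a' \<in> H \<and> a + zmul j x = a' + zmul j' x"
      using that by blast
    from someI_ex[OF this] have "a' \<in> H" "a + zmul j x = a' + zmul j' x"
      unfolding rep by simp_all
    moreover have "\<psi> (a + zmul j x) = g a' j'"
      unfolding \<psi>_def rep by simp
    ultimately show ?thesis
      using assms that by metis
  qed
  then show ?thesis
    by blast
qed

lemma additive_on_extend_one:
  assumes H: "is_subgroup H" "additive_on H \<phi>"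
    and c: "\<And>j. zmul j x \<in> H \<Longrightarrow> zmul j c = \<phi> (zmul j x)"
  shows "\<exists>\<phi>'. additive_on {a + zmul j x | a j. a \<in> H} \<phi>' \<and> (\<forall>a\<in>H. \<forall>j. \<phi>' (a + zmul j x) = \<phi> a + zmul j c)"
proof -
  have "\<phi> a + zmul j c = \<phi> a' + zmul j' c"
    if "a \<in> H" "a' \<in> H" "a + zmul j x = a' + zmul j' x" for a a' j j'
  proof -
    have "zmul (j - j') x = a' - a"
      using that(3) by (simp add: zmul_diff_left algebra_simps)
    moreover have "a' - a \<in> H"
      using H that by (simp add: subgroup_diff)
    ultimately have "zmul (j - j') c = \<phi> a' - \<phi> a"
      using c additive_on_diff[OF H] that by metis
    then show ?thesis
      by (simp add: zmul_diff_left algebra_simps)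
  qed
  then obtain \<phi>' where \<phi>': "\<forall>a\<in>H. \<forall>j. \<phi>' (a + zmul j x) = \<phi> a + zmul j c"
    using exists_fun_on_plus_multiples[of H x "\<lambda>a j. \<phi> a + zmul j c"] by blast
  have "additive_on {a + zmul j x | a j. a \<in> H} \<phi>'"
    unfolding additive_on_def
  proof (intro ballI)
    fix p q assume "p \<in> {a + zmul j x | a j. a \<in> H}" "q \<in> {a + zmul j x | a j. a \<in> H}"
    then obtain a j a' j' where a: "a \<in> H" "a' \<in> H" and pq: "p = a + zmul j x" "q = a' + zmul j' x"
      by blast
    have "p + q = (a + a') + zmul (j + j') x"
      unfolding pq by (simp add: zmul_add_left algebra_simps)
    then have "\<phi>' (p + q) = \<phi> (a + a') + zmul (j + j') c"
      using \<phi>' subgroup_add[OF H(1) a] by simp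
    also have "\<dots> = \<phi>' p + \<phi>' q"
      using \<phi>' a H(2) unfolding pq additive_on_def by (simp add: zmul_add_left algebra_simps)
    finally show "\<phi>' (p + q) = \<phi>' p + \<phi>' q" .
  qed
  with \<phi>' show ?thesis
    by blast
qed

definition extension_graphs :: "'a::ab_group_add set \<Rightarrow> 'a set \<Rightarrow> ('a \<Rightarrow> 'a) \<Rightarrow> ('a \<times> 'a) set set" where
  "extension_graphs S C h = {G. single_valued G \<and> is_subgroup (Domain G) \<and> Range G \<subseteq> C \<and>
     (\<forall>(a, b)\<in>G. \<forall>(a', b')\<in>G. (a + a', b + b') \<in> G) \<and> (\<forall>z\<in>S. (z, h z) \<in> G)}"

lemma graph_in_extension_graphs:
  assumes "is_subgroup H" "S \<subseteq> H" "\<phi> ` H \<subseteq> C" "additive_on H \<phi>" "\<forall>z\<in>S. \<phi> z = h z"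
  shows "{(a, \<phi> a) | a. a \<in> H} \<in> extension_graphs S C h"
proof -
  have "Domain {(a, \<phi> a) | a. a \<in> H} = H"
    by blast
  with assms show ?thesis
    unfolding extension_graphs_def additive_on_def single_valued_def
    by (auto dest: subgroup_add[OF assms(1)])
qed

lemma extension_graphs_graph:
  assumes "G \<in> extension_graphs S C h"
  defines "\<phi> \<equiv> \<lambda>a. THE b. (a, b) \<in> G"
  shows "G = {(a, \<phi> a) | a. a \<in> Domain G}" and "is_subgroup (Domain G)" and "S \<subseteq> Domain G"
    and "\<phi> ` Domain G \<subseteq> C" and "additive_on (Domain G) \<phi>" and "\<forall>z\<in>S. \<phi> z = h z"
proof -
  have sv: "single_valued G"
    using assms(1) unfolding extension_graphs_def by blast
  have \<phi>_eq: "\<phi> a = b" if "(a, b) \<in> G" for a b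
    unfolding \<phi>_def using that sv by (auto simp: single_valued_def)
  show graph: "G = {(a, \<phi> a) | a. a \<in> Domain G}"
    using \<phi>_eq by fastforce
  show "is_subgroup (Domain G)" "S \<subseteq> Domain G" "\<forall>z\<in>S. \<phi> z = h z"
    using assms(1) \<phi>_eq unfolding extension_graphs_def by blast+
  show "\<phi> ` Domain G \<subseteq> C"
    using assms(1) graph unfolding extension_graphs_def by blast
  show "additive_on (Domain G) \<phi>"
    unfolding additive_on_def
  proof (intro ballI)
    fix u v assume "u \<in> Domain G" "v \<in> Domain G"
    then have "(u, \<phi> u) \<in> G" "(v, \<phi> v) \<in> G"
      using graph by blast+
    then have "(u + v, \<phi> u + \<phi> v) \<in> G"
      using assms(1) unfolding extension_graphs_def by blast
    then show "\<phi> (u + v) = \<phi> u + \<phi> v"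
      by (rule \<phi>_eq)
  qed
qed

lemma extension_graphs_Union:
  assumes Ch: "Ch \<in> chains (extension_graphs S C h)" and "Ch \<noteq> {}"
  shows "\<Union>Ch \<in> extension_graphs S C h"
proof -
  have member: "single_valued G" "is_subgroup (Domain G)" "Range G \<subseteq> C"
    "\<And>a b a' b'. (a, b) \<in> G \<Longrightarrow> (a', b') \<in> G \<Longrightarrow> (a + a', b + b') \<in> G"
    "\<And>z. z \<in> S \<Longrightarrow> (z, h z) \<in> G" if "G \<in> Ch" for G
    using chainsD2[OF Ch] that unfolding extension_graphs_def by blast+
  have common: "\<exists>G\<in>Ch. p \<in> G \<and> q \<in> G" if "p \<in> \<Union>Ch" "q \<in> \<Union>Ch" for p q
    using that chainsD[OF Ch] by blast
  obtain G0 where "G0 \<in> Ch"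
    using assms(2) by blast
  have add: "(a + a', b + b') \<in> \<Union>Ch" if "(a, b) \<in> \<Union>Ch" "(a', b') \<in> \<Union>Ch" for a b a' b'
    using common[OF that] member(4) by blast
  have "is_subgroup (Domain (\<Union>Ch))"
    unfolding is_subgroup_def
  proof (intro conjI ballI)
    show "0 \<in> Domain (\<Union>Ch)"
      using subgroup_0[OF member(2)[OF \<open>G0 \<in> Ch\<close>]] \<open>G0 \<in> Ch\<close> by blast
    show "u + v \<in> Domain (\<Union>Ch)" if "u \<in> Domain (\<Union>Ch)" "v \<in> Domain (\<Union>Ch)" for u v
      using that add by blast
    show "- u \<in> Domain (\<Union>Ch)" if u: "u \<in> Domain (\<Union>Ch)" for u
    proof -
      obtain G where "G \<in> Ch" "u \<in> Domain G"
        using u by blast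
      then show ?thesis
        using subgroup_minus[OF member(2)] by blast
    qed
  qed
  moreover have "single_valued (\<Union>Ch)"
  proof (rule single_valuedI)
    fix a b b' assume "(a, b) \<in> \<Union>Ch" "(a, b') \<in> \<Union>Ch"
    then obtain G where "G \<in> Ch" "(a, b) \<in> G" "(a, b') \<in> G"
      using common by blast
    then show "b = b'"
      using member(1) single_valuedD by metis
  qed
  moreover have "Range (\<Union>Ch) \<subseteq> C" "\<forall>z\<in>S. (z, h z) \<in> \<Union>Ch"
    using member(3,5) \<open>G0 \<in> Ch\<close> by blast+
  ultimately show ?thesis
    unfolding extension_graphs_def using add by blast
qed

lemma extension_graphs_maximal_total:
  assumes C: "is_subgroup C" and M: "M \<in> extension_graphs S C h"
    and divisible: "\<And>x m. m > 0 \<Longrightarrow> zmul m x \<in> Domain M \<Longrightarrow>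
        \<exists>c\<in>C. zmul m c = (THE b. (zmul m x, b) \<in> M)"
    and maximal: "\<forall>X\<in>extension_graphs S C h. M \<subseteq> X \<longrightarrow> X = M"
  shows "Domain M = UNIV"
proof (rule ccontr)
  define H where "H = Domain M"
  define \<phi> where "\<phi> a = (THE b. (a, b) \<in> M)" for a
  note graph = extension_graphs_graph[OF M, folded H_def, folded \<phi>_def]
  assume "Domain M \<noteq> UNIV"
  then obtain x where "x \<notin> H"
    unfolding H_def by blast
  have "\<exists>c\<in>C. zmul m c = \<phi> (zmul m x)" if "m > 0" "zmul m x \<in> H" for m
    using divisible that unfolding \<phi>_def H_def by blast
  then obtain c where c: "c \<in> C" "\<And>j. zmul j x \<in> H \<Longrightarrow> zmul j c = \<phi> (zmul j x)"
    using exists_compatible_value[OF graph(2,5) C] by blast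
  define H' where "H' = {a + zmul j x | a j. a \<in> H}"
  obtain \<phi>' where "additive_on H' \<phi>'" and \<phi>': "\<forall>a\<in>H. \<forall>j. \<phi>' (a + zmul j x) = \<phi> a + zmul j c"
    using additive_on_extend_one[OF graph(2,5) c(2), folded H'_def] by blast
  have "\<phi>' a = \<phi> a" if "a \<in> H" for a
    using \<phi>' that by (metis add.right_neutral zmul_0_left)
  moreover have "H \<subseteq> H'"
    unfolding H'_def by (force intro: exI[of _ 0])
  moreover have "x = 0 + zmul 1 x"
    by simp
  then have "x \<in> H'"
    unfolding H'_def using subgroup_0[OF graph(2)] by blast
  moreover have "\<phi>' ` H' \<subseteq> C"
    unfolding H'_def using \<phi>' graph(4) c(1) C by (auto intro!: subgroup_add subgroup_zmul)
  ultimately have "{(a, \<phi>' a) | a. a \<in> H'} \<in> extension_graphs S C h"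
    using graph(3,6) is_subgroup_plus_multiples[OF graph(2), of x, folded H'_def] \<open>additive_on H' \<phi>'\<close>
    by (intro graph_in_extension_graphs) auto
  moreover have "M \<subseteq> {(a, \<phi>' a) | a. a \<in> H'}"
    using graph(1) \<open>H \<subseteq> H'\<close> \<open>\<And>a. a \<in> H \<Longrightarrow> \<phi>' a = \<phi> a\<close> by auto
  ultimately have "H' = H"
    using maximal unfolding H_def by blast
  with \<open>x \<in> H'\<close> \<open>x \<notin> H\<close> show False
    by blast
qed

(* Zorn's lemma over partial extensions of h; the last hypothesis is exactly what is needed
   to extend one of them from H to H + Z x. *)
lemma extend_additive:
  assumes S: "is_subgroup S" and C: "is_subgroup C" and hC: "h ` S \<subseteq> C" and h: "additive_on S h"
    and divisible: "\<And>H \<phi> x m. is_subgroup H \<Longrightarrow> S \<subseteq> H \<Longrightarrow> \<phi> ` H \<subseteq> C \<Longrightarrow> additive_on H \<phi> \<Longrightarrow>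
        \<forall>z\<in>S. \<phi> z = h z \<Longrightarrow> m > 0 \<Longrightarrow> zmul m x \<in> H \<Longrightarrow> \<exists>c\<in>C. zmul m c = \<phi> (zmul m x)"
  shows "\<exists>F\<in>End. range F \<subseteq> C \<and> (\<forall>x\<in>S. F x = h x)"
proof -
  let ?E = "extension_graphs S C h"
  have base: "{(a, h a) | a. a \<in> S} \<in> ?E"
    by (rule graph_in_extension_graphs[OF S order_refl hC h]) simp
  have "\<forall>Ch\<in>chains ?E. \<exists>U\<in>?E. \<forall>X\<in>Ch. X \<subseteq> U"
  proof
    fix Ch assume "Ch \<in> chains ?E"
    then show "\<exists>U\<in>?E. \<forall>X\<in>Ch. X \<subseteq> U"
      using base extension_graphs_Union[of Ch] by (cases "Ch = {}") blast+
  qed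
  from Zorn_Lemma2[OF this] obtain M where M: "M \<in> ?E" and maximal: "\<forall>X\<in>?E. M \<subseteq> X \<longrightarrow> X = M"
    by blast
  define \<phi> where "\<phi> a = (THE b. (a, b) \<in> M)" for a
  note graph = extension_graphs_graph[OF M, folded \<phi>_def]
  have "Domain M = UNIV"
  proof (rule extension_graphs_maximal_total[OF C M _ maximal])
    fix x m assume "m > 0" "zmul m x \<in> Domain M"
    with divisible[OF graph(2,3,4,5,6)] show "\<exists>c\<in>C. zmul m c = (THE b. (zmul m x, b) \<in> M)"
      unfolding \<phi>_def by blast
  qed
  with graph(4,5,6) show ?thesis
    unfolding End_def additive_on_def by auto
qed

section \<open>Divisible subgroups and idempotent endomorphisms\<close>

lemma divisible_subgroup_zmul:
  assumes "divisible_subgroup E" "w \<in> E" "m > 0"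
  shows "\<exists>c\<in>E. zmul m c = w"
proof -
  have "nat m > 0"
    using assms(3) by simp
  then obtain c where "c \<in> E" "nsmul (nat m) c = w"
    using assms(1,2) unfolding divisible_subgroup_def by blast
  then show ?thesis
    using assms(3) zmul_of_nat[of "nat m" c] by auto
qed

lemma divisible_extension:
  assumes E: "divisible_subgroup E" and S: "is_subgroup S" and hE: "h ` S \<subseteq> E" and h: "additive_on S h"
  shows "\<exists>F\<in>End. range F \<subseteq> E \<and> (\<forall>x\<in>S. F x = h x)"
proof (rule extend_additive[OF S _ hE h])
  show "is_subgroup E"
    using E unfolding divisible_subgroup_def by blast
  show "\<exists>c\<in>E. zmul m c = \<phi> (zmul m x)" if "\<phi> ` H \<subseteq> E" "m > 0" "zmul m x \<in> H" for H \<phi> x m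
    using divisible_subgroup_zmul[OF E] that by blast
qed

lemma divisible_retraction:
  assumes "divisible_subgroup E"
  shows "\<exists>\<pi>\<in>End. range \<pi> \<subseteq> E \<and> (\<forall>x\<in>E. \<pi> x = x)"
  using divisible_extension[OF assms, of E "\<lambda>x. x"] assms
  unfolding divisible_subgroup_def additive_on_def by simp

(* If e f (1 - e) were non-zero, a non-zero central multiple z of it would satisfy
   z = e z = z e = 0. *)
lemma idempotent_corner_zero:
  assumes CE: "End_centrally_essential TYPE('a::ab_group_add)"
    and e: "e \<in> End" "\<And>x. e (e x) = (e x :: 'a)" and f: "f \<in> End"
  shows "e (f (x - e x)) = 0"
proof -
  define a where "a z = e (f (z - e z))" for z
  have "a \<in> End"
    unfolding a_def End_def using e f by (simp add: End_add End_diff)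
  have "a = (\<lambda>_. 0)"
  proof (rule ccontr)
    assume "a \<noteq> (\<lambda>_. 0)"
    then obtain u v where u: "u \<in> End_center" and v: "v \<in> End_center"
      and "v \<noteq> (\<lambda>_. 0)" and auv: "a \<circ> u = v"
      using CE \<open>a \<in> End\<close> unfolding End_centrally_essential_def by blast
    have "u \<circ> e = e \<circ> u" "v \<circ> e = e \<circ> v"
      using u v e(1) unfolding End_center_def by auto
    have "v z = 0" for z
    proof -
      have "v (e z) = a (e (u z))"
        using auv \<open>u \<circ> e = e \<circ> u\<close> by (metis comp_apply)
      also have "\<dots> = 0"
        unfolding a_def using e f by (simp add: End_0)
      finally have "v (e z) = 0" .
      moreover have "e (v z) = v z"
        using auv e(2) unfolding a_def by (metis comp_apply)
      ultimately show ?thesis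
        using \<open>v \<circ> e = e \<circ> v\<close> by (metis comp_apply)
    qed
    with \<open>v \<noteq> (\<lambda>_. 0)\<close> show False
      by auto
  qed
  then show ?thesis
    unfolding a_def by meson
qed

lemma idempotent_End_central:
  assumes CE: "End_centrally_essential TYPE('a::ab_group_add)"
    and e: "e \<in> End" "\<And>x. e (e x) = (e x :: 'a)" and f: "f \<in> End"
  shows "e (f x) = f (e x)"
proof -
  define e' where "e' z = z - e z" for z
  have e': "e' \<in> End" "e' (e' z) = e' z" for z
    unfolding e'_def End_def using e by (simp_all add: End_add End_diff)
  have "e (f x) = e (f (e x))"
    using idempotent_corner_zero[OF CE e f, of x] f e by (simp add: End_diff)
  also have "\<dots> = f (e x)"
    using idempotent_corner_zero[OF CE e' f, of "e x"] unfolding e'_def by (simp add: e)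
  finally show ?thesis .
qed

lemma retraction_End_invariant:
  assumes CE: "End_centrally_essential TYPE('a::ab_group_add)"
    and \<pi>: "\<pi> \<in> End" "range \<pi> \<subseteq> E" "\<forall>x\<in>E. \<pi> x = (x::'a)" and "f \<in> End" "x \<in> E"
  shows "f x \<in> E"
proof -
  have "\<pi> (\<pi> z) = \<pi> z" for z
    using \<pi>(2,3) by blast
  then have "f x = \<pi> (f x)"
    using idempotent_End_central[OF CE \<pi>(1) _ \<open>f \<in> End\<close>, of x] \<pi>(3) \<open>x \<in> E\<close> by simp
  then show ?thesis
    using \<pi>(2) by (metis rangeI subsetD)
qed

lemma divisible_End_invariant:
  assumes "End_centrally_essential TYPE('a::ab_group_add)"
    and "divisible_subgroup E" "f \<in> End" "x \<in> (E::'a set)"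
  shows "f x \<in> E"
  using divisible_retraction[OF assms(2)] retraction_End_invariant[OF assms(1) _ _ _ assms(3,4)] by blast

definition End_commute_at :: "'a::ab_group_add \<Rightarrow> bool" where
  "End_commute_at x \<longleftrightarrow> (\<forall>f\<in>End. \<forall>g\<in>End. f (g x) = g (f x))"

lemma End_commute_at_0: "End_commute_at 0"
  unfolding End_commute_at_def by (simp add: End_0)

lemma End_commute_at_add: "End_commute_at x \<Longrightarrow> End_commute_at y \<Longrightarrow> End_commute_at (x + y)"
  unfolding End_commute_at_def by (simp add: End_add)

lemma End_commute_at_zmul: "End_commute_at x \<Longrightarrow> End_commute_at (zmul j x)"
  unfolding End_commute_at_def by (simp add: End_zmul)

lemma End_commute_at_if_End_multiples:
  assumes "\<And>f. f \<in> End \<Longrightarrow> f x \<in> multiples x"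
  shows "End_commute_at x"
  unfolding End_commute_at_def
proof (intro ballI)
  fix f g :: "'a \<Rightarrow> 'a" assume f: "f \<in> End" and g: "g \<in> End"
  obtain a b where "f x = zmul a x" "g x = zmul b x"
    using assms[OF f] assms[OF g] unfolding multiples_def by blast
  with f g show "f (g x) = g (f x)"
    by (simp add: End_zmul zmul_commute)
qed

section \<open>Ascending unions of cyclic subgroups\<close>

(* For s i = N i * s (i + 1) this is the union of the increasing chain of cyclic subgroups
   generated by the s i. With N i = i + 1 it is divisible; with N i = P prime and s 0 of
   P-power order it is a Pruefer group. *)
definition multiples_chain :: "(nat \<Rightarrow> 'a::ab_group_add) \<Rightarrow> 'a set" where
  "multiples_chain s = (\<Union>i. multiples (s i))"

lemma in_multiples_chain_iff: "w \<in> multiples_chain s \<longleftrightarrow> (\<exists>j i. w = zmul j (s i))"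
  by (auto simp: multiples_chain_def in_multiples_iff)

lemma chain_zmul_prod:
  assumes chain: "\<And>i. s i = zmul (N i) (s (Suc i))" and "i \<le> l"
  shows "s i = zmul (\<Prod>k\<in>{i..<l}. N k) (s l)"
  using assms(2)
proof (induction rule: dec_induct)
  case base
  then show ?case
    by simp
next
  case (step l)
  then show ?case
    using chain[of l] by (simp add: prod.atLeastLessThan_Suc zmul_mult)
qed

lemma multiples_chain_mono:
  assumes "\<And>i. s i = zmul (N i) (s (Suc i))" and "i \<le> l"
  shows "multiples (s i) \<subseteq> multiples (s l)"
proof
  fix x assume "x \<in> multiples (s i)"
  then obtain j where "x = zmul j (s i)"
    unfolding multiples_def by blast
  then have "x = zmul (j * (\<Prod>k\<in>{i..<l}. N k)) (s l)"
    using chain_zmul_prod[of s N, OF assms] by (simp add: zmul_mult)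
  then show "x \<in> multiples (s l)"
    by (metis zmul_in_multiples)
qed

lemma multiples_chain_finite_level:
  assumes chain: "\<And>i. s i = zmul (N i) (s (Suc i))"
    and "finite X" "X \<subseteq> multiples_chain s"
  shows "\<exists>K. X \<subseteq> multiples (s K)"
  using assms(2,3)
proof (induction X rule: finite_induct)
  case empty
  then show ?case
    by blast
next
  case (insert x X)
  then obtain K i where "X \<subseteq> multiples (s K)" "x \<in> multiples (s i)"
    unfolding multiples_chain_def by blast
  then have "insert x X \<subseteq> multiples (s (max K i))"
    using multiples_chain_mono[of s N, OF chain, of K "max K i"] multiples_chain_mono[of s N, OF chain, of i "max K i"]
    by auto
  then show ?case
    by blast
qed

lemma is_subgroup_multiples_chain:
  assumes chain: "\<And>i. s i = zmul (N i) (s (Suc i))"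
  shows "is_subgroup (multiples_chain s)"
  unfolding is_subgroup_def
proof (intro conjI ballI)
  show "0 \<in> multiples_chain s"
    using subgroup_0[OF is_subgroup_multiples] unfolding multiples_chain_def by blast
  show "x + y \<in> multiples_chain s" if xy: "x \<in> multiples_chain s" "y \<in> multiples_chain s" for x y
  proof -
    have "finite {x, y}" "{x, y} \<subseteq> multiples_chain s"
      using xy by simp_all
    from multiples_chain_finite_level[of s N, OF chain this] obtain K where "{x, y} \<subseteq> multiples (s K)"
      by blast
    then have "x + y \<in> multiples (s K)"
      using subgroup_add[OF is_subgroup_multiples] by blast
    then show ?thesis
      unfolding multiples_chain_def by blast
  qed
  show "- x \<in> multiples_chain s" if "x \<in> multiples_chain s" for x
    using that subgroup_minus[OF is_subgroup_multiples] unfolding multiples_chain_def by blast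
qed

lemma factorial_chain_divisible:
  assumes chain: "\<And>i. s i = zmul (int (Suc i)) (s (Suc i))"
  shows "divisible_subgroup (multiples_chain s)"
  unfolding divisible_subgroup_def
proof (intro conjI ballI allI impI)
  show "is_subgroup (multiples_chain s)"
    using is_subgroup_multiples_chain[of s "\<lambda>i. int (Suc i)", OF chain] .
  fix w and n :: nat assume "w \<in> multiples_chain s" "n > 0"
  then obtain j i where w: "w = zmul j (s i)"
    unfolding multiples_chain_def multiples_def by blast
  define l where "l = n * (i + 1) - 1"
  have "Suc l = n * (i + 1)" "i \<le> l"
    unfolding l_def using \<open>n > 0\<close> by (cases n; simp)+
  then obtain t where t: "s i = zmul t (s l)"
    using chain_zmul_prod[of s "\<lambda>i. int (Suc i)", OF chain] by blast
  have "int (Suc l) = int n * int (i + 1)"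
    unfolding \<open>Suc l = n * (i + 1)\<close> by (rule of_nat_mult)
  then have l: "s l = zmul (int n * int (i + 1)) (s (Suc l))"
    using chain[of l] by (simp only:)
  have "w = zmul (j * (t * (int n * int (i + 1)))) (s (Suc l))"
    using w t l by (simp only: zmul_mult)
  also have "\<dots> = zmul (int n * (j * t * int (i + 1))) (s (Suc l))"
    by (simp add: algebra_simps)
  also have "\<dots> = zmul (int n) (zmul (j * t * int (i + 1)) (s (Suc l)))"
    by (rule zmul_mult)
  finally have "w = nsmul n (zmul (j * t * int (i + 1)) (s (Suc l)))"
    by (simp only: zmul_of_nat)
  moreover have "zmul (j * t * int (i + 1)) (s (Suc l)) \<in> multiples_chain s"
    unfolding multiples_chain_def using zmul_in_multiples by blast
  ultimately show "\<exists>e\<in>multiples_chain s. nsmul n e = w"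
    by blast
qed

lemma End_commute_at_torsion_free_chain:
  assumes chain: "\<And>i. s i = zmul (N i) (s (Suc i))"
    and invariant: "\<And>f w. f \<in> End \<Longrightarrow> w \<in> multiples_chain s \<Longrightarrow> f w \<in> multiples_chain s"
    and torsion_free: "\<And>j. zmul j (s 0) = 0 \<Longrightarrow> j = 0"
  shows "End_commute_at (s 0)"
  unfolding End_commute_at_def
proof (intro ballI)
  fix f g :: "'a \<Rightarrow> 'a" assume f: "f \<in> End" and g: "g \<in> End"
  have s0: "s 0 \<in> multiples_chain s"
    using self_in_multiples unfolding multiples_chain_def by blast
  have "f (g (s 0)) - g (f (s 0)) \<in> multiples_chain s"
    using subgroup_diff[OF is_subgroup_multiples_chain[of s N, OF chain]]
      invariant[OF f invariant[OF g s0]] invariant[OF g invariant[OF f s0]] by blast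
  then have "{f (s 0), g (s 0), f (g (s 0)) - g (f (s 0))} \<subseteq> multiples_chain s"
    using invariant[OF f s0] invariant[OF g s0] by simp
  from multiples_chain_finite_level[of s N, OF chain _ this]
  obtain K where "{f (s 0), g (s 0), f (g (s 0)) - g (f (s 0))} \<subseteq> multiples (s K)"
    by blast
  then have "f (s 0) \<in> multiples (s K)" "g (s 0) \<in> multiples (s K)"
    "f (g (s 0)) - g (f (s 0)) \<in> multiples (s K)"
    by simp_all
  then obtain a b c where a: "f (s 0) = zmul a (s K)" and b: "g (s 0) = zmul b (s K)"
    and c: "f (g (s 0)) - g (f (s 0)) = zmul c (s K)"
    unfolding in_multiples_iff by blast
  define M where "M = (\<Prod>k\<in>{0..<K}. N k)"
  have M: "zmul M (s K) = s 0"
    unfolding M_def using chain_zmul_prod[of s N, OF chain, of 0 K] by simp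
  have "zmul M (f (g (s 0))) = zmul b (f (zmul M (s K)))"
    using b f by (simp add: End_zmul zmul_commute)
  also have "\<dots> = zmul b (zmul a (s K))"
    using M a by simp
  finally have fg: "zmul M (f (g (s 0))) = zmul b (zmul a (s K))" .
  have "zmul M (g (f (s 0))) = zmul a (g (zmul M (s K)))"
    using a g by (simp add: End_zmul zmul_commute)
  also have "\<dots> = zmul a (zmul b (s K))"
    using M b by simp
  finally have gf: "zmul M (g (f (s 0))) = zmul a (zmul b (s K))" .
  have "zmul c (s 0) = zmul M (f (g (s 0)) - g (f (s 0)))"
    using c M[symmetric] by (simp add: zmul_commute)
  also have "\<dots> = 0"
    using fg gf by (simp add: zmul_diff_right zmul_commute)
  finally have "zmul c (s 0) = 0" .
  then have "c = 0"
    by (rule torsion_free)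
  then show "f (g (s 0)) = g (f (s 0))"
    using c by simp
qed

lemma End_commute_at_infinite_order:
  assumes CE: "End_centrally_essential TYPE('a::ab_group_add)"
    and D: "divisible_subgroup D" and "d \<in> (D::'a set)" and torsion_free: "\<forall>n>0. zmul (int n) d \<noteq> 0"
  shows "End_commute_at d"
proof -
  have "\<exists>s. \<forall>i. (s i \<in> D \<and> (i = 0 \<longrightarrow> s i = d)) \<and> s i = zmul (int (Suc i)) (s (Suc i))"
  proof (rule dependent_nat_choice)
    show "\<exists>x. x \<in> D \<and> (0 = 0 \<longrightarrow> x = d)"
      using \<open>d \<in> D\<close> by blast
    show "\<exists>y. (y \<in> D \<and> (Suc i = 0 \<longrightarrow> y = d)) \<and> x = zmul (int (Suc i)) y"
      if x: "x \<in> D \<and> (i = 0 \<longrightarrow> x = d)" for x i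
    proof -
      obtain y where "y \<in> D" "zmul (int (Suc i)) y = x"
        using divisible_subgroup_zmul[OF D, of x "int (Suc i)"] x by auto
      then show ?thesis
        by auto
    qed
  qed
  then obtain s where s0: "s 0 = d" and chain: "\<And>i. s i = zmul (int (Suc i)) (s (Suc i))"
    by blast
  have "End_commute_at (s 0)"
  proof (rule End_commute_at_torsion_free_chain[of s, OF chain])
    show "f w \<in> multiples_chain s" if "f \<in> End" "w \<in> multiples_chain s" for f w
      using divisible_End_invariant[OF CE factorial_chain_divisible[OF chain] that] .
    show "j = 0" if "zmul j (s 0) = 0" for j
      using zmul_eq_0_imp_eq_0_if_no_torsion[OF torsion_free] that s0 by simp
  qed
  then show ?thesis
    using s0 by simp
qed

section \<open>Elements of prime power order\<close>

lemma zmul_coprime_inverse: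
  assumes "coprime a m" "zmul m x = 0"
  shows "\<exists>u. zmul (u * a) x = x"
proof -
  obtain u v where "u * a + v * m = 1"
    using bezout_int[of a m] assms(1) by (auto simp: coprime_iff_gcd_eq_1)
  then have "x = zmul (u * a + v * m) x"
    by simp
  also have "\<dots> = zmul (u * a) x"
    using assms(2) by (simp add: zmul_add_left zmul_mult)
  finally show ?thesis
    by (intro exI[of _ u]) (rule sym)
qed

lemma prime_order_dvd:
  assumes "prime P" "c \<noteq> 0" "zmul P c = 0" "zmul j c = 0"
  shows "P dvd j"
proof (rule ccontr)
  assume "\<not> P dvd j"
  then have "coprime j P"
    using prime_imp_coprime[OF assms(1)] coprime_commute by blast
  then obtain u where "zmul (u * j) c = c"
    using zmul_coprime_inverse[OF _ assms(3)] by blast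
  with assms(2,4) show False
    by (simp add: zmul_mult)
qed

lemma power_dvd_or_factor:
  fixes P j :: int
  shows "P ^ N dvd j \<or> (\<exists>a<N. \<exists>u. j = P ^ a * u \<and> \<not> P dvd u)"
proof (induction N)
  case 0
  then show ?case
    by simp
next
  case (Suc N)
  show ?case
  proof (cases "P ^ N dvd j")
    case True
    then obtain u where u: "j = P ^ N * u"
      by blast
    show ?thesis
    proof (cases "P dvd u")
      case True
      then obtain u' where "u = P * u'"
        by blast
      then show ?thesis
        using u by (simp add: ac_simps)
    next
      case False
      then show ?thesis
        using u by blast
    qed
  next
    case False
    then show ?thesis
      using Suc.IH less_SucI by blast
  qed
qed

lemma zmul_eq_0_iff_prime_power_dvd:
  assumes P: "prime P" and "N \<ge> 1" and "zmul (P ^ N) w = 0" and "zmul (P ^ (N - 1)) w \<noteq> 0"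
  shows "zmul j w = 0 \<longleftrightarrow> P ^ N dvd j"
proof
  assume jw: "zmul j w = 0"
  show "P ^ N dvd j"
  proof (rule ccontr)
    assume "\<not> P ^ N dvd j"
    then obtain a u where a: "a < N" "j = P ^ a * u" "\<not> P dvd u"
      using power_dvd_or_factor[of P N j] by blast
    define c where "c = zmul (P ^ (N - 1)) w"
    have "P * P ^ (N - 1) = P ^ N"
      using \<open>N \<ge> 1\<close> by (simp add: power_eq_if)
    then have "zmul P c = 0"
      unfolding c_def using assms(3) by (metis zmul_mult)
    moreover have "P ^ (N - 1) * u = P ^ (N - 1 - a) * j"
      using a by (simp add: power_add[symmetric] mult.assoc[symmetric])
    then have "zmul u c = 0"
      unfolding c_def using jw by (metis zmul_mult mult.commute zmul_0_right)
    ultimately have "P dvd u"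
      using prime_order_dvd[OF P] assms(4) unfolding c_def by blast
    with a(3) show False ..
  qed
next
  assume "P ^ N dvd j"
  then obtain t where "j = t * P ^ N"
    by (metis dvd_def mult.commute)
  then show "zmul j w = 0"
    using assms(3) by (simp add: zmul_mult)
qed

lemma exact_prime_power_order:
  assumes "k \<noteq> 0" and "zmul ((P::int) ^ m) k = 0"
  shows "\<exists>N\<ge>1. zmul (P ^ N) k = 0 \<and> zmul (P ^ (N - 1)) k \<noteq> 0"
proof -
  define N where "N = (LEAST N. zmul (P ^ N) k = 0)"
  have N: "zmul (P ^ N) k = 0"
    unfolding N_def using assms(2) by (rule LeastI)
  then have "N \<ge> 1"
    using assms(1) by (cases N) auto
  moreover have "zmul (P ^ (N - 1)) k \<noteq> 0"
  proof
    assume "zmul (P ^ (N - 1)) k = 0"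
    then have "N \<le> N - 1"
      unfolding N_def by (rule Least_le)
    with \<open>N \<ge> 1\<close> show False
      by simp
  qed
  ultimately show ?thesis
    using N by blast
qed

lemma divisible_subgroup_if_prime_divisible:
  assumes E: "is_subgroup E"
    and prime_divisible: "\<And>w q. w \<in> E \<Longrightarrow> prime (q::nat) \<Longrightarrow> \<exists>z\<in>E. zmul (int q) z = w"
  shows "divisible_subgroup E"
proof -
  have "\<forall>w\<in>E. \<exists>z\<in>E. zmul (int n) z = w" if "n > 0" for n
    using that
  proof (induction n rule: less_induct)
    case (less n)
    show ?case
    proof (cases "n = 1")
      case True
      then show ?thesis
        by auto
    next
      case False
      then obtain q where q: "prime q" "q dvd n"
        using prime_factor_nat by blast
      then obtain n' where n': "n = n' * q"
        by (metis dvd_def mult.commute)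
      then have "n' < n" "n' > 0"
        using less.prems prime_gt_1_nat[OF q(1)] by auto
      show ?thesis
      proof
        fix w assume "w \<in> E"
        then obtain z1 where "z1 \<in> E" "zmul (int n') z1 = w"
          using less.IH[OF \<open>n' < n\<close> \<open>n' > 0\<close>] by blast
        moreover obtain z2 where "z2 \<in> E" "zmul (int q) z2 = z1"
          using prime_divisible[OF \<open>z1 \<in> E\<close> q(1)] by blast
        ultimately show "\<exists>z\<in>E. zmul (int n) z = w"
          using n' by (metis of_nat_mult zmul_mult)
      qed
    qed
  qed
  then show ?thesis
    unfolding divisible_subgroup_def using E by (simp add: zmul_of_nat)
qed

lemma prime_root_of_bounded:
  assumes unbounded_height: "\<And>c::'a::ab_group_add. zmul P c = 0 \<Longrightarrow> \<forall>h. \<exists>z. zmul (P ^ h) z = c"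
    and "zmul (P ^ m) (w::'a) = 0"
  shows "\<exists>z. zmul P z = w \<and> zmul (P ^ (m + 1)) z = 0"
  using assms(2)
proof (induction m arbitrary: w)
  case 0
  then show ?case
    by (intro exI[of _ 0]) simp
next
  case (Suc m)
  define c where "c = zmul (P ^ m) w"
  have "zmul P c = 0"
    unfolding c_def using Suc.prems by (simp add: zmul_mult[symmetric] mult.commute)
  then obtain z1 where z1: "zmul (P ^ (m + 1)) z1 = c"
    using unbounded_height[OF \<open>zmul P c = 0\<close>] by blast
  have "zmul (P ^ m) (w - zmul P z1) = 0"
    using z1 unfolding c_def by (simp add: zmul_diff_right zmul_mult[symmetric] mult.commute)
  then obtain z2 where z2: "zmul P z2 = w - zmul P z1" "zmul (P ^ (m + 1)) z2 = 0"
    using Suc.IH by blast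
  have "zmul P (z1 + z2) = w"
    using z2(1) by (simp add: zmul_add_right)
  moreover have "zmul (P ^ (Suc m + 1)) (z1 + z2) = 0"
    using z1 z2(2) \<open>zmul P c = 0\<close>
    by (simp add: zmul_add_right zmul_mult[symmetric] mult.commute) (simp add: zmul_mult)
  ultimately show ?case
    by blast
qed

lemma prime_power_chain_exists:
  assumes unbounded_height: "\<And>c::'a::ab_group_add. zmul P c = 0 \<Longrightarrow> \<forall>h. \<exists>z. zmul (P ^ h) z = c"
    and "zmul (P ^ N) (k::'a) = 0"
  shows "\<exists>s. s 0 = k \<and> (\<forall>i. s i = zmul P (s (Suc i)) \<and> zmul (P ^ (N + i)) (s i) = 0)"
proof -
  have "\<exists>s. \<forall>i. (zmul (P ^ (N + i)) (s i) = 0 \<and> (i = 0 \<longrightarrow> s i = k)) \<and> s i = zmul P (s (Suc i))"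
  proof (rule dependent_nat_choice)
    show "\<exists>x. zmul (P ^ (N + 0)) x = 0 \<and> (0 = 0 \<longrightarrow> x = k)"
      using assms(2) by auto
    show "\<exists>y. (zmul (P ^ (N + Suc i)) y = 0 \<and> (Suc i = 0 \<longrightarrow> y = k)) \<and> x = zmul P y"
      if x: "zmul (P ^ (N + i)) x = 0 \<and> (i = 0 \<longrightarrow> x = k)" for x i
      using prime_root_of_bounded[OF unbounded_height, of "N + i" x] x by auto
  qed
  then show ?thesis
    by blast
qed

lemma prime_power_chain_divisible:
  assumes P: "prime P" and chain: "\<And>i. s i = zmul P (s (Suc i))"
    and bounded: "\<And>i. zmul (P ^ n i) (s i) = 0"
  shows "divisible_subgroup (multiples_chain s)"
proof (rule divisible_subgroup_if_prime_divisible)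
  show "is_subgroup (multiples_chain s)"
    using is_subgroup_multiples_chain[of s "\<lambda>_. P", OF chain] .
  fix w and q :: nat assume "w \<in> multiples_chain s" "prime q"
  then obtain j i where w: "w = zmul j (s i)"
    unfolding in_multiples_chain_iff by blast
  show "\<exists>z\<in>multiples_chain s. zmul (int q) z = w"
  proof (cases "int q = P")
    case True
    then have "zmul (int q) (zmul j (s (Suc i))) = w"
      using w chain[of i] by (simp add: zmul_commute)
    then show ?thesis
      unfolding multiples_chain_def using zmul_in_multiples by blast
  next
    case False
    then have "coprime (int q) P"
      using primes_coprime[OF _ P] \<open>prime q\<close> by simp
    then have "coprime (int q) (P ^ n i)"
      by simp
    moreover have "zmul (P ^ n i) w = 0"
      using w bounded[of i] by (simp add: zmul_commute)
    ultimately obtain u where "zmul (u * int q) w = w"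
      using zmul_coprime_inverse by blast
    then have "zmul (int q) (zmul (u * j) (s i)) = w"
      using w by (simp add: zmul_mult zmul_commute)
    then show ?thesis
      unfolding multiples_chain_def using zmul_in_multiples by blast
  qed
qed

lemma prime_power_chain_order:
  assumes P: "prime P" and chain: "\<And>i. s i = zmul P (s (Suc i))"
    and N: "N \<ge> 1" "zmul (P ^ N) (s 0) = 0" "zmul (P ^ (N - 1)) (s 0) \<noteq> 0"
  shows "zmul j (s i) = 0 \<longleftrightarrow> P ^ (N + i) dvd j"
proof (rule zmul_eq_0_iff_prime_power_dvd[OF P])
  have climb: "zmul (P ^ i) (s i) = s 0"
    using chain_zmul_prod[of s "\<lambda>_. P", OF chain, of 0 i] by simp
  show "1 \<le> N + i"
    using N(1) by simp
  show "zmul (P ^ (N + i)) (s i) = 0"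
    using climb N(2) by (simp add: power_add zmul_mult)
  have "zmul (P ^ (N + i - 1)) (s i) = zmul (P ^ (N - 1)) (zmul (P ^ i) (s i))"
    using N(1) by (simp add: zmul_mult[symmetric] power_add[symmetric])
  then show "zmul (P ^ (N + i - 1)) (s i) \<noteq> 0"
    using climb N(3) by simp
qed

lemma End_commute_at_primary_unbounded_height:
  assumes CE: "End_centrally_essential TYPE('a::ab_group_add)" and P: "prime P"
    and unbounded_height: "\<And>c::'a. zmul P c = 0 \<Longrightarrow> \<forall>h. \<exists>z. zmul (P ^ h) z = c"
    and "zmul (P ^ m) (k::'a) = 0"
  shows "End_commute_at k"
proof (cases "k = 0")
  case True
  then show ?thesis
    by (simp add: End_commute_at_0)
next
  case False
  obtain N where N: "N \<ge> 1" "zmul (P ^ N) k = 0" "zmul (P ^ (N - 1)) k \<noteq> 0"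
    using exact_prime_power_order[OF False assms(4)] by blast
  obtain s where s0: "s 0 = k" and chain: "\<And>i. s i = zmul P (s (Suc i))"
    and bounded: "\<And>i. zmul (P ^ (N + i)) (s i) = 0"
    using prime_power_chain_exists[OF unbounded_height N(2)] by blast
  note order = prime_power_chain_order[OF P chain N[folded s0]]
  show ?thesis
  proof (rule End_commute_at_if_End_multiples)
    fix f :: "'a \<Rightarrow> 'a" assume f: "f \<in> End"
    have "k \<in> multiples_chain s"
      using self_in_multiples s0 unfolding multiples_chain_def by blast
    then have "f k \<in> multiples_chain s"
      using divisible_End_invariant[OF CE prime_power_chain_divisible[of P s "\<lambda>i. N + i", OF P chain bounded] f]
      by blast
    then obtain j i where fk: "f k = zmul j (s i)"
      unfolding in_multiples_chain_iff by blast
    have "zmul (P ^ N * j) (s i) = f (zmul (P ^ N) k)"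
      using f fk by (simp add: zmul_mult End_zmul)
    then have "P ^ N * P ^ i dvd P ^ N * j"
      using order f N(2) by (simp add: End_0 power_add)
    then obtain t where "j = t * P ^ i"
      using P by (metis dvd_def mult.commute dvd_mult_cancel_left power_not_zero not_prime_0)
    then have "f k = zmul t (zmul (P ^ i) (s i))"
      using fk by (simp add: zmul_mult)
    then show "f k \<in> multiples k"
      using chain_zmul_prod[of s "\<lambda>_. P", OF chain, of 0 i] s0 by simp
  qed
qed

lemma multiples_hom:
  assumes "\<And>j. zmul j x = 0 \<Longrightarrow> zmul j b = 0"
  shows "\<exists>\<psi>. additive_on (multiples x) \<psi> \<and> (\<forall>j. \<psi> (zmul j x) = zmul j b)"
proof -
  define \<psi> where "\<psi> z = zmul (SOME j. z = zmul j x) b" for z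
  have \<psi>: "\<psi> (zmul j x) = zmul j b" for j
  proof -
    define j' where "j' = (SOME j'. zmul j x = zmul j' x)"
    have "zmul j x = zmul j' x"
      unfolding j'_def by (rule someI[of _ j]) (rule refl)
    then have "zmul (j - j') x = 0"
      by (simp add: zmul_diff_left)
    then have "zmul (j - j') b = 0"
      by (rule assms)
    then show ?thesis
      unfolding \<psi>_def j'_def[symmetric] by (simp add: zmul_diff_left)
  qed
  have "additive_on (multiples x) \<psi>"
    unfolding additive_on_def
  proof (intro ballI)
    fix u v assume "u \<in> multiples x" "v \<in> multiples x"
    then obtain j j' where "u = zmul j x" "v = zmul j' x"
      unfolding in_multiples_iff by blast
    then show "\<psi> (u + v) = \<psi> u + \<psi> v"
      using \<psi> by (simp add: zmul_add_left[symmetric])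
  qed
  with \<psi> show ?thesis
    by blast
qed

(* y has order P^(h+1) and P^h y has P-height exactly h, so that the cyclic subgroup
   generated by y is pure. *)
definition pure_cyclic_generator :: "int \<Rightarrow> nat \<Rightarrow> 'a::ab_group_add \<Rightarrow> bool" where
  "pure_cyclic_generator P h y \<longleftrightarrow> zmul (P ^ h) y \<noteq> 0 \<and> zmul (P ^ Suc h) y = 0 \<and>
     \<not> (\<exists>z. zmul (P ^ Suc h) z = zmul (P ^ h) y)"

lemma pure_cyclic_generator_order:
  assumes "prime P" "pure_cyclic_generator P h y"
  shows "zmul j y = 0 \<longleftrightarrow> P ^ Suc h dvd j"
  using zmul_eq_0_iff_prime_power_dvd[of P "Suc h" y j] assms unfolding pure_cyclic_generator_def by simp

lemma pure_cyclic_generator_inter: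
  assumes P: "prime P" and y: "pure_cyclic_generator P h y" and "zmul j y = zmul (P ^ Suc h) a"
  shows "zmul j y = 0"
proof (rule ccontr)
  assume "zmul j y \<noteq> 0"
  then have "\<not> P ^ Suc h dvd j"
    using pure_cyclic_generator_order[OF P y] by simp
  then obtain e u where e: "e < Suc h" "j = P ^ e * u" "\<not> P dvd u"
    using power_dvd_or_factor[of P "Suc h" j] by blast
  have "P ^ (h - e) * j = u * P ^ h"
    using e by (simp add: mult.assoc[symmetric] power_add[symmetric] mult.commute)
  then have "zmul u (zmul (P ^ h) y) = zmul (P ^ (h - e)) (zmul j y)"
    by (simp add: zmul_mult[symmetric])
  also have "\<dots> = zmul (P ^ Suc h) (zmul (P ^ (h - e)) a)"
    using assms(3) by (simp add: zmul_commute)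
  finally have u: "zmul u (zmul (P ^ h) y) = zmul (P ^ Suc h) (zmul (P ^ (h - e)) a)" .
  have "coprime u P"
    using prime_imp_coprime[OF P e(3)] coprime_commute by blast
  moreover have "zmul P (zmul (P ^ h) y) = 0"
    using y unfolding pure_cyclic_generator_def by (simp add: zmul_mult[symmetric])
  ultimately obtain u' where "zmul (u' * u) (zmul (P ^ h) y) = zmul (P ^ h) y"
    using zmul_coprime_inverse by blast
  then have "zmul (P ^ Suc h) (zmul u' (zmul (P ^ (h - e)) a)) = zmul (P ^ h) y"
    using u by (simp add: zmul_mult zmul_commute)
  with y show False
    unfolding pure_cyclic_generator_def by blast
qed

lemma cyclic_prime_power_divisible:
  assumes P: "prime P" and order: "\<And>j. zmul j y = 0 \<longleftrightarrow> P ^ n dvd j"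
    and "e \<le> n" "\<not> P dvd u" and w: "w \<in> multiples y" "zmul (P ^ (n - e)) w = 0"
  shows "\<exists>c\<in>multiples y. zmul (P ^ e * u) c = w"
proof -
  obtain i where i: "w = zmul i y"
    using w(1) unfolding in_multiples_iff by blast
  have "P ^ n = P ^ (n - e) * P ^ e"
    using \<open>e \<le> n\<close> by (simp flip: power_add)
  moreover have "zmul (P ^ (n - e) * i) y = 0"
    using w(2) i by (simp add: zmul_mult)
  then have "P ^ n dvd P ^ (n - e) * i"
    using order by blast
  moreover have "P ^ (n - e) \<noteq> 0"
    using P by (simp add: prime_gt_0_int)
  ultimately obtain i' where i': "i = P ^ e * i'"
    by (metis dvd_def dvd_mult_cancel_left)
  have "coprime u (P ^ n)"
    using prime_imp_coprime[OF P \<open>\<not> P dvd u\<close>] coprime_commute by auto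
  moreover have "zmul (P ^ n) y = 0"
    using order by simp
  ultimately obtain u' where u': "zmul (u' * u) y = y"
    using zmul_coprime_inverse by blast
  have "zmul (P ^ e * u) (zmul (u' * i') y) = zmul (P ^ e * i') (zmul (u' * u) y)"
    unfolding zmul_mult[symmetric] by (simp add: ac_simps)
  also have "\<dots> = w"
    using u' i i' by simp
  finally show ?thesis
    using zmul_in_multiples by blast
qed

lemma pure_cyclic_extension_step:
  assumes P: "prime P" and order: "\<And>j. zmul j y = 0 \<longleftrightarrow> P ^ Suc h dvd j"
    and H: "is_subgroup H" "additive_on H \<phi>" "\<phi> ` H \<subseteq> multiples y"
    and kills: "\<And>a. \<phi> (zmul (P ^ Suc h) a) = 0"
    and "m > 0" and x: "zmul m x \<in> H"
  shows "\<exists>c\<in>multiples y. zmul m c = \<phi> (zmul m x)"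
proof (cases "P ^ Suc h dvd m")
  case True
  then obtain t where "m = P ^ Suc h * t"
    by blast
  then have "\<phi> (zmul m x) = zmul m 0"
    using kills[of "zmul t x"] by (simp add: zmul_mult)
  then show ?thesis
    using zmul_in_multiples[of 0 y] by (metis zmul_0_left)
next
  case False
  then obtain e u where e: "e < Suc h" "m = P ^ e * u" "\<not> P dvd u"
    using power_dvd_or_factor[of P "Suc h" m] by blast
  have "P ^ Suc h = P ^ (Suc h - e) * P ^ e"
    using e(1) by (simp flip: power_add)
  then have "P ^ (Suc h - e) * m = P ^ Suc h * u"
    unfolding e(2) by (simp only: ac_simps)
  then have "zmul (P ^ (Suc h - e)) (\<phi> (zmul m x)) = 0"
    using additive_on_zmul[OF H(1,2) x] kills by (metis zmul_mult)
  moreover have "\<phi> (zmul m x) \<in> multiples y"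
    using H(3) x by blast
  ultimately show ?thesis
    using cyclic_prime_power_divisible[OF P order _ e(3)] e(1,2) by simp
qed

lemma is_subgroup_range_zmul: "is_subgroup (range (zmul m))"
  unfolding is_subgroup_def
proof (intro conjI ballI)
  have "0 = zmul m 0"
    by simp
  then show "0 \<in> range (zmul m)"
    by blast
  show "x + y \<in> range (zmul m)" if xy: "x \<in> range (zmul m)" "y \<in> range (zmul m)" for x y
  proof -
    obtain a b where "x = zmul m a" "y = zmul m b"
      using xy by blast
    then have "x + y = zmul m (a + b)"
      by (simp add: zmul_add_right)
    then show ?thesis
      by blast
  qed
  show "- x \<in> range (zmul m)" if x: "x \<in> range (zmul m)" for x
  proof -
    obtain a where "x = zmul m a"
      using x by blast
    then have "- x = zmul m (- a)"
      by (simp add: zmul_minus_right)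
    then show ?thesis
      by blast
  qed
qed

lemma pure_cyclic_retraction:
  assumes P: "prime P" and y: "pure_cyclic_generator P h y"
  shows "\<exists>\<pi>\<in>End. range \<pi> \<subseteq> multiples y \<and> (\<forall>x\<in>multiples y. \<pi> x = x)"
proof -
  define n where "n = P ^ Suc h"
  define S where "S = {a + zmul j y | a j. a \<in> range (zmul n)}"
  have "zmul j y = 0" if "zmul j y \<in> range (zmul n)" for j
    using that pure_cyclic_generator_inter[OF P y] unfolding n_def by blast
  \<comment> \<open>the projection of \<open>n A + Z y\<close> onto \<open>Z y\<close>, well defined as the sum is direct\<close>
  then obtain \<rho> where "additive_on S \<rho>" and \<rho>: "\<forall>a\<in>range (zmul n). \<forall>j. \<rho> (a + zmul j y) = zmul j y"
    using additive_on_extend_one[OF is_subgroup_range_zmul, of n "\<lambda>_. 0" y y]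
    unfolding S_def additive_on_def by auto
  have S: "x \<in> S \<longleftrightarrow> (\<exists>a j. x = zmul n a + zmul j y)" for x
    unfolding S_def by blast
  have "\<rho> ` S \<subseteq> multiples y"
    unfolding S_def using \<rho> by auto
  have "\<exists>c\<in>multiples y. zmul m c = \<phi> (zmul m x)"
    if "is_subgroup H" "S \<subseteq> H" "\<phi> ` H \<subseteq> multiples y" "additive_on H \<phi>" "\<forall>z\<in>S. \<phi> z = \<rho> z"
      "m > 0" "zmul m x \<in> H" for H \<phi> m x
  proof (rule pure_cyclic_extension_step[OF P pure_cyclic_generator_order[OF P y] that(1,4,3) _ that(6,7)])
    fix a
    have "zmul n a = zmul n a + zmul 0 y"
      by simp
    then have "zmul n a \<in> S"
      unfolding S by blast
    moreover from \<rho> have "\<rho> (zmul n a + zmul 0 y) = zmul 0 y"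
      by blast
    ultimately show "\<phi> (zmul (P ^ Suc h) a) = 0"
      using that(5) unfolding n_def by simp
  qed
  then obtain \<pi> where \<pi>: "\<pi> \<in> End" "range \<pi> \<subseteq> multiples y" "\<forall>x\<in>S. \<pi> x = \<rho> x"
    using extend_additive[OF is_subgroup_plus_multiples[OF is_subgroup_range_zmul] is_subgroup_multiples
        \<open>\<rho> ` S \<subseteq> multiples y\<close>[unfolded S_def] \<open>additive_on S \<rho>\<close>[unfolded S_def]]
    unfolding S_def by blast
  have "\<pi> x = x" if x: "x \<in> multiples y" for x
  proof -
    obtain j where "x = zmul j y"
      using x unfolding in_multiples_iff by blast
    moreover have "zmul j y = zmul n 0 + zmul j y"
      by simp
    ultimately have "x \<in> S" "x = zmul n 0 + zmul j y"
      unfolding S by blast+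
    moreover from \<rho> have "\<rho> (zmul n 0 + zmul j y) = zmul j y"
      by blast
    ultimately show ?thesis
      using \<pi>(3) by simp
  qed
  with \<pi>(1,2) show ?thesis
    by blast
qed

lemma central_cyclic_retraction_kernel:
  assumes CE: "End_centrally_essential TYPE('a::ab_group_add)"
    and \<pi>: "\<pi> \<in> End" "range \<pi> \<subseteq> multiples y" "\<forall>x\<in>multiples y. \<pi> x = (x::'a)"
    and "\<pi> b = 0" and "\<And>j. zmul j y = 0 \<Longrightarrow> zmul j b = 0"
  shows "b = 0"
proof -
  have idem: "\<pi> (\<pi> x) = \<pi> x" for x
    using \<pi>(2,3) by blast
  obtain \<psi> where \<psi>: "additive_on (multiples y) \<psi>" "\<And>j. \<psi> (zmul j y) = zmul j b"
    using multiples_hom[of y b] assms(6) by blast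
  have "\<psi> \<circ> \<pi> \<in> End"
    unfolding End_def
  proof (intro CollectI allI)
    fix u v
    have "\<pi> u \<in> multiples y" "\<pi> v \<in> multiples y"
      using \<pi>(2) by blast+
    then show "(\<psi> \<circ> \<pi>) (u + v) = (\<psi> \<circ> \<pi>) u + (\<psi> \<circ> \<pi>) v"
      using \<psi>(1) End_add[OF \<pi>(1)] unfolding additive_on_def by simp
  qed
  have "\<pi> y = y" "\<psi> y = b"
    using \<pi>(3) self_in_multiples[of y] \<psi>(2)[of 1] by simp_all
  then have "\<pi> b = b"
    using idempotent_End_central[OF CE \<pi>(1) idem \<open>\<psi> \<circ> \<pi> \<in> End\<close>, of y] by simp
  with \<open>\<pi> b = 0\<close> show ?thesis
    by simp
qed

lemma central_cyclic_retraction_contains_primary: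
  assumes CE: "End_centrally_essential TYPE('a::ab_group_add)" and P: "prime P"
    and order: "\<And>j. zmul j y = 0 \<Longrightarrow> P dvd j"
    and \<pi>: "\<pi> \<in> End" "range \<pi> \<subseteq> multiples y" "\<forall>x\<in>multiples y. \<pi> x = (x::'a)"
    and "zmul (P ^ m) k = 0"
  shows "k \<in> multiples y"
proof -
  have idem: "\<pi> (\<pi> x) = \<pi> x" for x
    using \<pi>(2,3) by blast
  define k' where "k' = k - \<pi> k"
  have "\<pi> k' = 0"
    unfolding k'_def using \<pi>(1) idem by (simp add: End_diff)
  have "zmul (P ^ m) k' = 0"
    unfolding k'_def using assms(7) \<pi>(1) by (simp add: zmul_diff_right End_zmul[symmetric] End_0)
  have "k' = 0"
  proof (rule ccontr)
    assume "k' \<noteq> 0"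
    then obtain N where N: "N \<ge> 1" "zmul (P ^ N) k' = 0" "zmul (P ^ (N - 1)) k' \<noteq> 0"
      using exact_prime_power_order[OF _ \<open>zmul (P ^ m) k' = 0\<close>] by blast
    define b where "b = zmul (P ^ (N - 1)) k'"
    have "P * P ^ (N - 1) = P ^ N"
      using N(1) by (simp add: power_eq_if)
    then have "zmul P b = 0"
      unfolding b_def using N(2) by (metis zmul_mult)
    have "zmul j b = 0" if jy: "zmul j y = 0" for j
    proof -
      obtain t where "j = t * P"
        using order[OF jy] by (metis dvd_def mult.commute)
      then show ?thesis
        using \<open>zmul P b = 0\<close> by (simp add: zmul_mult)
    qed
    moreover have "\<pi> b = 0"
      unfolding b_def using \<pi>(1) \<open>\<pi> k' = 0\<close> by (simp add: End_zmul)
    ultimately have "b = 0"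
      using central_cyclic_retraction_kernel[OF CE \<pi>] by blast
    with N(3) show False
      unfolding b_def by simp
  qed
  moreover have "\<pi> k \<in> multiples y"
    using \<pi>(2) by blast
  ultimately show ?thesis
    unfolding k'_def by simp
qed

lemma End_commute_at_primary_bounded_height:
  assumes CE: "End_centrally_essential TYPE('a::ab_group_add)" and P: "prime P"
    and y: "pure_cyclic_generator P h (y::'a)" and "zmul (P ^ m) (k::'a) = 0"
  shows "End_commute_at k"
proof -
  obtain \<pi> where \<pi>: "\<pi> \<in> End" "range \<pi> \<subseteq> multiples y" "\<forall>x\<in>multiples y. \<pi> x = x"
    using pure_cyclic_retraction[OF P y] by blast
  have "P dvd j" if "zmul j y = 0" for j
    using that pure_cyclic_generator_order[OF P y] dvd_trans[of P "P ^ Suc h" j] by simp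
  then have "k \<in> multiples y"
    using central_cyclic_retraction_contains_primary[OF CE P _ \<pi> assms(4)] by blast
  moreover have "End_commute_at y"
    using retraction_End_invariant[OF CE \<pi> _ self_in_multiples] by (rule End_commute_at_if_End_multiples)
  ultimately show ?thesis
    unfolding in_multiples_iff using End_commute_at_zmul by blast
qed

lemma End_commute_at_primary:
  assumes CE: "End_centrally_essential TYPE('a::ab_group_add)" and P: "prime P"
    and "zmul (P ^ m) (k::'a) = 0"
  shows "End_commute_at k"
proof (cases "\<exists>h (y::'a). pure_cyclic_generator P h y")
  case True
  then show ?thesis
    using End_commute_at_primary_bounded_height[OF CE P _ assms(3)] by blast
next
  case False
  have "\<exists>z. zmul (P ^ h) z = c" if c: "zmul P c = 0" for c :: 'a and h
  proof (induction h)
    case 0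
    show ?case
      by (intro exI[of _ c]) simp
  next
    case (Suc h)
    then obtain y where y: "zmul (P ^ h) y = c"
      by blast
    show ?case
    proof (rule ccontr)
      assume "\<nexists>z. zmul (P ^ Suc h) z = c"
      moreover from this have "c \<noteq> 0"
        by (metis zmul_0_right)
      moreover have "zmul (P ^ Suc h) y = 0"
        using y c by (simp add: zmul_mult)
      ultimately have "pure_cyclic_generator P h y"
        unfolding pure_cyclic_generator_def using y by simp
      with False show False
        by blast
    qed
  qed
  then show ?thesis
    using End_commute_at_primary_unbounded_height[OF CE P _ assms(3)] by blast
qed

section \<open>Torsion elements and non-reduced groups\<close>

lemma End_commute_at_coprime_multiples:
  assumes "coprime a b" "End_commute_at (zmul a k)" "End_commute_at (zmul b k)"
  shows "End_commute_at k"
proof -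
  obtain u v where "u * a + v * b = 1"
    using bezout_int[of a b] assms(1) by (auto simp: coprime_iff_gcd_eq_1)
  then have "k = zmul u (zmul a k) + zmul v (zmul b k)"
    by (simp add: zmul_mult[symmetric] zmul_add_left[symmetric])
  then show ?thesis
    using assms(2,3) End_commute_at_add End_commute_at_zmul by metis
qed

lemma End_commute_at_torsion:
  assumes CE: "End_centrally_essential TYPE('a::ab_group_add)"
  shows "n > 0 \<Longrightarrow> zmul (int n) (k::'a) = 0 \<Longrightarrow> End_commute_at k"
proof (induction n arbitrary: k rule: less_induct)
  case (less n)
  show ?case
  proof (cases "n = 1")
    case True
    then show ?thesis
      using less.prems End_commute_at_0 by simp
  next
    case False
    then obtain p where p: "prime p" "p dvd n"
      using prime_factor_nat by blast
    obtain r where r: "n = p ^ multiplicity p n * r" "\<not> p dvd r"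
    proof (rule multiplicity_decompose')
      show "n \<noteq> 0"
        using less.prems by simp
      show "\<not> is_unit p"
        using p(1) not_prime_unit by blast
    qed
    define a where "a = multiplicity p n"
    have n: "n = p ^ a * r"
      using r(1) unfolding a_def .
    have "a \<noteq> 0"
      using n p(2) r(2) by (cases a) auto
    then have "p ^ a > 1"
      using prime_gt_1_nat[OF p(1)] one_less_power by blast
    moreover have "r > 0"
      using n less.prems by (cases r) auto
    ultimately have "r < n"
      using n by simp
    have "zmul (int p ^ a * int r) k = 0"
      using less.prems n by (metis of_nat_mult of_nat_power)
    then have "End_commute_at (zmul (int p ^ a) k)" "End_commute_at (zmul (int r) k)"
      using less.IH[OF \<open>r < n\<close> \<open>r > 0\<close>] End_commute_at_primary[OF CE _ , of "int p" a]
        p(1) by (simp_all add: zmul_mult[symmetric] mult.commute)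
    moreover have "coprime (int p ^ a) (int r)"
      using prime_imp_coprime[of "int p" "int r"] p(1) r(2) by simp
    ultimately show ?thesis
      using End_commute_at_coprime_multiples by blast
  qed
qed

lemma divisible_hom_of_torsion_free:
  assumes D: "divisible_subgroup D" "d \<in> D" and torsion_free: "\<forall>n>0. zmul (int n) k \<noteq> 0"
  shows "\<exists>\<phi>\<in>End. range \<phi> \<subseteq> D \<and> \<phi> k = d"
proof -
  have "zmul j k = 0 \<Longrightarrow> zmul j d = 0" for j
    using zmul_eq_0_imp_eq_0_if_no_torsion[OF torsion_free, of j] by simp
  then obtain h where h: "additive_on (multiples k) h" "\<And>j. h (zmul j k) = zmul j d"
    using multiples_hom by blast
  have "h ` multiples k \<subseteq> D"
  proof
    fix w assume "w \<in> h ` multiples k"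
    then obtain z where "z \<in> multiples k" "w = h z"
      by blast
    then obtain j where "w = h (zmul j k)"
      unfolding in_multiples_iff by blast
    then show "w \<in> D"
      using h(2) subgroup_zmul[OF _ D(2)] D(1) unfolding divisible_subgroup_def by simp
  qed
  then obtain \<phi> where "\<phi> \<in> End" "range \<phi> \<subseteq> D" "\<forall>x\<in>multiples k. \<phi> x = h x"
    using divisible_extension[OF D(1) is_subgroup_multiples _ h(1)] by blast
  moreover have "h k = d"
    using h(2)[of 1] by simp
  ultimately show ?thesis
    using self_in_multiples[of k] by auto
qed

lemma torsion_if_killed_by_divisible_retraction:
  assumes CE: "End_centrally_essential TYPE('a::ab_group_add)"
    and D: "divisible_subgroup D" and d: "d \<in> D" "d \<noteq> 0"
    and e: "e \<in> End" "range e \<subseteq> D" "\<forall>x\<in>D. e x = (x::'a)" and "e k = 0"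
  shows "\<exists>n>0. zmul (int n) k = 0"
proof (rule ccontr)
  assume "\<not> (\<exists>n>0. zmul (int n) k = 0)"
  then obtain \<phi> where \<phi>: "\<phi> \<in> End" "range \<phi> \<subseteq> D" "\<phi> k = d"
    using divisible_hom_of_torsion_free[OF D d(1)] by blast
  define \<psi> where "\<psi> x = \<phi> (x - e x)" for x
  have "\<psi> \<in> End"
    unfolding End_def
  proof (intro CollectI allI)
    fix u v
    have "u + v - e (u + v) = (u - e u) + (v - e v)"
      using End_add[OF e(1)] by (simp add: algebra_simps)
    then show "\<psi> (u + v) = \<psi> u + \<psi> v"
      unfolding \<psi>_def by (simp only: End_add[OF \<phi>(1)])
  qed
  have idem: "e (e x) = e x" for x
    using e(2,3) by blast
  have "\<psi> k = d"
    unfolding \<psi>_def using \<open>e k = 0\<close> \<phi>(3) by simp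
  moreover have "\<psi> k \<in> D"
    unfolding \<psi>_def using \<phi>(2) by blast
  then have "e (\<psi> k) = \<psi> k"
    using e(3) by blast
  moreover have "\<psi> (e k) = 0"
    unfolding \<psi>_def using \<open>e k = 0\<close> End_0[OF \<phi>(1)] End_0[OF e(1)] by simp
  ultimately show False
    using idempotent_End_central[OF CE e(1) idem \<open>\<psi> \<in> End\<close>, of k] d(2) by simp
qed

lemma non_reduced_nonzero_divisible:
  assumes "non_reduced TYPE('a::ab_group_add)"
  shows "\<exists>D::'a set. divisible_subgroup D \<and> (\<exists>d\<in>D. d \<noteq> 0)"
proof -
  obtain D :: "'a set" where "divisible_subgroup D" "D \<noteq> {0}"
    using assms unfolding non_reduced_def by blast
  moreover from this have "0 \<in> D"
    unfolding divisible_subgroup_def using subgroup_0 by blast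
  ultimately show ?thesis
    by blast
qed

lemma centrally_essential_End_commute_at:
  assumes CE: "End_centrally_essential TYPE('a::ab_group_add)" and "non_reduced TYPE('a)"
  shows "End_commute_at (x::'a)"
proof -
  obtain D :: "'a set" and d where D: "divisible_subgroup D" and d: "d \<in> D" "d \<noteq> 0"
    using non_reduced_nonzero_divisible[OF assms(2)] by blast
  obtain e where e: "e \<in> End" "range e \<subseteq> D" "\<forall>x\<in>D. e x = x"
    using divisible_retraction[OF D] by blast
  have "End_commute_at (e x)"
  proof (cases "\<exists>n>0. zmul (int n) (e x) = 0")
    case True
    then show ?thesis
      using End_commute_at_torsion[OF CE] by blast
  next
    case False
    moreover have "e x \<in> D"
      using e(2) by blast
    ultimately show ?thesis
      using End_commute_at_infinite_order[OF CE D] by blast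
  qed
  moreover have "e (e x) = e x"
    using e(2,3) by blast
  then have "e (x - e x) = 0"
    using End_diff[OF e(1)] by simp
  then have "End_commute_at (x - e x)"
    using torsion_if_killed_by_divisible_retraction[OF CE D d e] End_commute_at_torsion[OF CE] by blast
  ultimately show ?thesis
    using End_commute_at_add by fastforce
qed

lemma End_centrally_essential_if_commutative:
  assumes "End_commutative TYPE('a::ab_group_add)" and "(a::'a) \<noteq> 0"
  shows "End_centrally_essential TYPE('a)"
  unfolding End_centrally_essential_def
proof (intro ballI impI)
  fix f :: "'a \<Rightarrow> 'a" assume "f \<in> End" "f \<noteq> (\<lambda>_. 0)"
  have "id \<in> End_center" "f \<in> End_center"
    using \<open>f \<in> End\<close> assms(1) unfolding End_center_def End_commutative_def End_def by auto
  moreover have "id \<noteq> (\<lambda>_::'a. 0)"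
    using assms(2) by (metis id_apply)
  ultimately show "\<exists>x\<in>End_center. \<exists>y\<in>End_center. x \<noteq> (\<lambda>_. 0) \<and> y \<noteq> (\<lambda>_. 0) \<and> f \<circ> x = y"
    using \<open>f \<noteq> (\<lambda>_. 0)\<close> by (metis comp_id)
qed

theorem corollary2p5:
  assumes "non_reduced TYPE('a::ab_group_add)"
  shows "End_centrally_essential TYPE('a) \<longleftrightarrow> End_commutative TYPE('a)"
proof
  assume "End_centrally_essential TYPE('a)"
  then have "End_commute_at (x::'a)" for x
    using centrally_essential_End_commute_at assms by blast
  then show "End_commutative TYPE('a)"
    unfolding End_commutative_def End_commute_at_def by auto
next
  obtain a :: 'a where "a \<noteq> 0"
    using non_reduced_nonzero_divisible[OF assms] by blast
  moreover assume "End_commutative TYPE('a)"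
  ultimately show "End_centrally_essential TYPE('a)"
    using End_centrally_essential_if_commutative by blast
qed

end
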